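(* Let $\|\cdot\|$ be a strictly convex norm on $\mathbb R^2$ that is $C^1$ on $\mathbb R^2\setminus\{0\}$. There is a constant $C>0$ depending only on $\mathsf B$ such that $\mathrm c^{1D}(z^+,z^-)\le C\,\mathrm c^{\mathrm{ENT}}(z^+,z^-)$ for all distinct $z^+,z^-\in\partial\mathsf B$.
   Context: $\mathsf B=\{\|z\|<1\}$ normalized so that $\partial\mathsf B$ has length $2\pi$; $\gamma$ is its counterclockwise arc-length parametrization; $\mathbb R^2\cong\mathbb C$, $i$ = rotation by $\pi/2$. For distinct $z^\pm\in\partial\mathsf B$: $\nu=i\frac{z^+-z^-}{|z^+-z^-|}$, $a=z^+\cdot\nu=z^-\cdot\nu$, $\mathrm c^{1D}(z^+,z^-)=2\big|\int_{z^-\cdot i\nu}^{z^+\cdot i\nu}(1-\|a\nu+s\,i\nu\|^2)\,ds\big|$, and $\mathrm c^{\mathrm{ENT}}(z^+,z^-)=\sup_{\lambda\in\Lambda_*}\int_{\theta^-}^{\theta^+}\lambda(t)\gamma'(t)\cdot\nu\,dt$ with $z^\pm=\gamma(\theta^\pm)$, $\Lambda_*=\{\lambda\in C^1(\mathbb R/2\pi\mathbb Z):\int_{\mathbb R/2\pi\mathbb Z}\lambda\gamma'=0,\ \|\lambda'\|_\infty\le1\}$. *)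

theory Defs
  imports "HOL-Complex_Analysis.Complex_Analysis"
begin

text \<open>R^2 is identified with the complex plane; the dot product is the Euclidean
  inner product on complex (Re x * Re y + Im x * Im y); i is multiplication by \<i>.\<close>

definition is_norm :: "(complex \<Rightarrow> real) \<Rightarrow> bool" where
  "is_norm N \<longleftrightarrow> (\<forall>x. 0 \<le> N x) \<and> (\<forall>x. N x = 0 \<longleftrightarrow> x = 0)
     \<and> (\<forall>(c::real) x. N (of_real c * x) = \<bar>c\<bar> * N x)
     \<and> (\<forall>x y. N (x + y) \<le> N x + N y)"

definition strictly_convex_norm :: "(complex \<Rightarrow> real) \<Rightarrow> bool" where
  "strictly_convex_norm N \<longleftrightarrow>
     (\<forall>x y. N x = 1 \<longrightarrow> N y = 1 \<longrightarrow> x \<noteq> y \<longrightarrow> N ((x + y) / 2) < 1)"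

definition C1_away_from_0 :: "(complex \<Rightarrow> real) \<Rightarrow> bool" where
  "C1_away_from_0 N \<longleftrightarrow> (\<exists>g::complex \<Rightarrow> complex.
     (\<forall>x. x \<noteq> 0 \<longrightarrow> (N has_derivative (\<lambda>h. g x \<bullet> h)) (at x))
     \<and> continuous_on (- {0}) g)"

definition unitball :: "(complex \<Rightarrow> real) \<Rightarrow> complex set" where
  "unitball N = {z. N z < 1}"

text \<open>Existence of such
  a gamma encodes the normalisation that the boundary of B has length 2pi.\<close>
definition ccw_arclength_param :: "(complex \<Rightarrow> real) \<Rightarrow> (real \<Rightarrow> complex) \<Rightarrow> bool" where
  "ccw_arclength_param N \<gamma> \<longleftrightarrow>
     (\<forall>t. \<gamma> (t + 2 * pi) = \<gamma> t)
     \<and> (\<forall>t. (\<gamma> has_vector_derivative vector_derivative \<gamma> (at t)) (at t))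
     \<and> continuous_on UNIV (\<lambda>t. vector_derivative \<gamma> (at t))
     \<and> (\<forall>t. norm (vector_derivative \<gamma> (at t)) = 1)
     \<and> inj_on \<gamma> {0..<2 * pi}
     \<and> \<gamma> ` {0..<2 * pi} = frontier (unitball N)
     \<and> winding_number (\<lambda>s. \<gamma> (2 * pi * s)) 0 = 1"

definition oint :: "real \<Rightarrow> real \<Rightarrow> (real \<Rightarrow> real) \<Rightarrow> real" where
  "oint a b f = (if a \<le> b then integral {a..b} f else - integral {b..a} f)"

definition Lambda_star :: "(real \<Rightarrow> complex) \<Rightarrow> (real \<Rightarrow> real) set" where
  "Lambda_star \<gamma> = {lam. (\<forall>t. lam (t + 2 * pi) = lam t)
       \<and> (\<forall>t. lam differentiable (at t))
       \<and> continuous_on UNIV (deriv lam)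
       \<and> integral {0..2 * pi} (\<lambda>t. lam t *\<^sub>R vector_derivative \<gamma> (at t)) = 0
       \<and> (\<forall>t. \<bar>deriv lam t\<bar> \<le> 1)}"

definition nu :: "complex \<Rightarrow> complex \<Rightarrow> complex" where
  "nu zp zm = \<i> * (zp - zm) / of_real (cmod (zp - zm))"

definition c_1D :: "(complex \<Rightarrow> real) \<Rightarrow> complex \<Rightarrow> complex \<Rightarrow> real" where
  "c_1D N zp zm =
     (let \<nu> = nu zp zm; a = zp \<bullet> \<nu>
      in 2 * \<bar>oint (zm \<bullet> (\<i> * \<nu>)) (zp \<bullet> (\<i> * \<nu>))
                 (\<lambda>s. 1 - (N (of_real a * \<nu> + of_real s * (\<i> * \<nu>)))\<^sup>2)\<bar>)"

text \<open>c^ENT evaluated with z^+ = gamma thp, z^- = gamma thm.\<close>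
definition c_ENT :: "(real \<Rightarrow> complex) \<Rightarrow> real \<Rightarrow> real \<Rightarrow> real" where
  "c_ENT \<gamma> thp thm =
     Sup ((\<lambda>lam. oint thm thp (\<lambda>t. lam t * (vector_derivative \<gamma> (at t) \<bullet> nu (\<gamma> thp) (\<gamma> thm))))
          ` Lambda_star \<gamma>)"

end

theory Submission
  imports Defs "HOL-Library.Real_Mod"
begin

(*
  Write z = gamma thp, z' = gamma thm, let nu be the unit normal of the chord [z', z] and
  p t = (gamma t - z') . nu the distance of the curve from the chord line, and pick an arc
  [al, be] of parameter length at most pi joining z' to z.

  Upper bound for c_1D: substituting s = gamma t . (i nu) turns the chord integral into an
  integral over the arc, and since 1 - N^2 vanishes on the unit circle, its integrand at the
  projection of gamma t onto the chord line is O(|p t|).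

  Lower bound for c_ENT: integrating by parts, the functional of lambda is -s times the
  integral of lambda' p over the arc, where s = 1 or -1 records the orientation, so it suffices
  to find lambda in Lambda_star with lambda' a small multiple of a smoothed sign of p on the
  arc.  Off the arc, lambda' is corrected by bump * (b0 + b1 . gamma), supported on a window of
  length pi/2 disjoint from the arc, where (b0, b1) is chosen so that lambda' keeps the two
  moment conditions that make lambda periodic with integral of lambda gamma' equal to 0.  This
  3x3 linear system is invertible because, by strict convexity, no three points of the unit
  circle are collinear; eight window positions suffice, which makes the bound on its inverse
  uniform.
*)

section \<open>Oriented integrals and periodic functions\<close>

lemma integrable_continuous_UNIV:
  fixes f :: "real \<Rightarrow> 'a::banach"
  shows "continuous_on UNIV f \<Longrightarrow> f integrable_on {a..b}"
  by (rule integrable_continuous_real) (auto intro: continuous_on_subset)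

lemma oint_0_split:
  fixes g :: "real \<Rightarrow> real"
  assumes g: "continuous_on UNIV g" and "a \<le> y"
  shows "oint 0 y g = oint 0 a g + integral {a..y} g"
proof -
  have combine: "integral {u..v} g + integral {v..w} g = integral {u..w} g"
    if "u \<le> v" "v \<le> w" for u v w
    using that by (intro Henstock_Kurzweil_Integration.integral_combine)
      (auto intro: integrable_continuous_UNIV g)
  show ?thesis
    using combine[of 0 a y] combine[of a 0 y] combine[of a y 0] assms(2)
    by (auto simp: oint_def)
qed

lemma oint_eq_diff:
  fixes g :: "real \<Rightarrow> real"
  assumes "continuous_on UNIV g"
  shows "oint a b g = oint 0 b g - oint 0 a g"
  using oint_0_split[OF assms, of a b] oint_0_split[OF assms, of b a]
  by (auto simp: oint_def)

lemma has_real_derivative_oint: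
  fixes g :: "real \<Rightarrow> real"
  assumes g: "continuous_on UNIV g"
  shows "((\<lambda>y. oint 0 y g) has_real_derivative g x) (at x)"
proof -
  have "((\<lambda>y. integral {x-1..y} g) has_real_derivative g x) (at x within {x-1..x+1})"
    by (rule integral_has_real_derivative) (auto intro: continuous_on_subset[OF g])
  moreover have "at x within {x-1..x+1} = at x"
    by (rule at_within_interior) auto
  ultimately have "((\<lambda>y. oint 0 (x-1) g + integral {x-1..y} g) has_real_derivative g x) (at x)"
    by (auto intro!: derivative_eq_intros)
  then show ?thesis
    by (rule has_field_derivative_transform_within_open[of _ _ _ "{x-1<..}"])
       (use oint_0_split[OF g, of "x-1", symmetric] in auto)
qed

lemma has_integral_global_antiderivative:
  assumes "a \<le> b" "\<And>x. (G has_real_derivative g x) (at x)"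
  shows "(g has_integral (G b - G a)) {a..b}"
  by (rule fundamental_theorem_of_calculus[OF assms(1)])
     (auto simp: has_real_derivative_iff_has_vector_derivative[symmetric]
           intro: has_field_derivative_at_within assms(2))

lemma integral_by_parts_vanishing_ends:
  fixes lam mu p p' :: "real \<Rightarrow> real"
  assumes ab: "a \<le> b" and lam: "\<And>t. (lam has_real_derivative mu t) (at t)"
    and p: "\<And>t. (p has_real_derivative p' t) (at t)"
    and mu: "continuous_on UNIV mu" and p': "continuous_on UNIV p'"
    and "p a = 0" "p b = 0"
  shows "integral {a..b} (\<lambda>t. lam t * p' t) = - integral {a..b} (\<lambda>t. mu t * p t)"
proof -
  have "continuous_on UNIV lam"
    by (rule continuous_at_imp_continuous_on) (use lam DERIV_continuous in blast)
  moreover have "continuous_on UNIV p"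
    by (rule continuous_at_imp_continuous_on) (use p DERIV_continuous in blast)
  ultimately have "integral {a..b} (\<lambda>t. mu t * p t + lam t * p' t)
      = integral {a..b} (\<lambda>t. mu t * p t) + integral {a..b} (\<lambda>t. lam t * p' t)"
    by (intro integral_add integrable_continuous_UNIV continuous_intros mu p')
  moreover have "((\<lambda>t. mu t * p t + lam t * p' t) has_integral (lam b * p b - lam a * p a)) {a..b}"
    by (rule has_integral_global_antiderivative[OF ab]) (auto intro!: derivative_eq_intros lam p)
  ultimately show ?thesis
    using assms(6,7) by (simp add: integral_unique)
qed

lemma periodic_add_of_int:
  assumes "\<And>t. f (t + 2*pi) = f t"
  shows "f (t + 2 * pi * of_int k) = f t"
proof -
  have nat: "f (s + 2 * pi * of_nat n) = f s" for n s
    by (induction n) (auto simp: algebra_simps assms[of "s + 2 * pi * of_nat _", simplified algebra_simps])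
  show ?thesis
    using nat[of t "nat k"] nat[of "t + 2 * pi * of_int k" "nat (-k)"] by (cases "k \<ge> 0") auto
qed

lemma periodic_rmod:
  assumes "\<And>t. f (t + 2*pi) = f t"
  shows "f (t rmod (2*pi)) = f t"
  using periodic_add_of_int[of f, OF assms, of "t rmod (2*pi)" "\<lfloor>t / (2*pi)\<rfloor>"]
  by (simp add: rmod_def)

lemma rmod_2pi_bounds: "t rmod (2*pi) \<in> {0..<2*pi}"
  using rmod_nonneg[of "2*pi" t] rmod_less[of "2*pi" t] by simp

lemma oint_periodic:
  fixes g :: "real \<Rightarrow> real"
  assumes g: "continuous_on UNIV g" and per: "\<And>t. g (t + 2*pi) = g t"
    and mean: "integral {0..2*pi} g = 0"
  shows "oint 0 (t + 2*pi) g = oint 0 t g"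
proof -
  have "\<exists>c. \<forall>x\<in>UNIV. oint 0 (x + 2*pi) g - oint 0 x g = c"
  proof (rule has_field_derivative_zero_constant)
    fix x
    have "((\<lambda>x. oint 0 (x + 2*pi) g) has_real_derivative g (x + 2*pi)) (at x)"
      using DERIV_chain2[OF has_real_derivative_oint[OF g] DERIV_add[OF DERIV_ident DERIV_const]]
      by simp
    then show "((\<lambda>x. oint 0 (x + 2*pi) g - oint 0 x g) has_real_derivative 0) (at x within UNIV)"
      using has_real_derivative_oint[OF g, of x] per[of x] by (auto intro: derivative_eq_intros)
  qed simp
  then obtain c where c: "\<And>x. oint 0 (x + 2*pi) g - oint 0 x g = c" by auto
  have "c = oint 0 (0 + 2*pi) g - oint 0 0 g" using c[of 0] by simp
  also have "\<dots> = 0" using oint_0_split[OF g, of 0 "2*pi"] mean by (simp add: oint_def)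
  finally show ?thesis using c[of t] by simp
qed

definition oint_via_arc :: "real \<Rightarrow> real \<Rightarrow> real \<Rightarrow> real \<Rightarrow> real \<Rightarrow> bool" where
  "oint_via_arc tm tp s al be \<longleftrightarrow> (\<forall>g. continuous_on UNIV g \<longrightarrow> (\<forall>t. g (t + 2*pi) = g t)
     \<longrightarrow> integral {0..2*pi} g = 0 \<longrightarrow> oint tm tp g = s * integral {al..be} g)"

lemma periodic_arc_between:
  fixes f :: "real \<Rightarrow> 'a"
  assumes per: "\<And>t. f (t + 2*pi) = f t" and ne: "f tp \<noteq> f tm"
  obtains al be s where "al < be" "be \<le> al + pi" "\<bar>s\<bar> = 1" "{f al, f be} = {f tp, f tm}"
    "oint_via_arc tm tp s al be"
proof -
  define r where "r = (tp - tm) rmod (2*pi)"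
  have r: "0 \<le> r" "r < 2*pi"
    using rmod_2pi_bounds[of "tp - tm"] by (auto simp: r_def)
  have shift: "h tp = h (tm + r)" if "\<And>t. h (t + 2*pi) = h t" for h :: "real \<Rightarrow> 'b"
  proof -
    have "h (tm + (tp - tm) rmod (2*pi)) = h (tm + (tp - tm))"
      by (rule periodic_rmod) (metis add.assoc that)
    then show ?thesis
      by (simp add: r_def)
  qed
  have "r \<noteq> 0"
    using shift[of f, OF per] ne by auto
  have oint: "oint tm tp g = integral {tm..tm + r} g"
    and period: "integral {tm..tm + r} g + integral {tm + r..tm + 2*pi} g = 0"
    if g: "continuous_on UNIV g" "\<And>t. g (t + 2*pi) = g t" "integral {0..2*pi} g = 0" for g
    using oint_eq_diff[OF g(1), of tm tp] shift[of "\<lambda>x. oint 0 x g"] oint_periodic[OF g, of tm]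
      oint_0_split[OF g(1), of tm "tm + r"] oint_0_split[OF g(1), of "tm + r" "tm + 2*pi"] r
    by (simp_all add: oint_periodic[OF g])
  show ?thesis
  proof (cases "r \<le> pi")
    case True
    show ?thesis
    proof (rule that[of tm "tm + r" 1])
      show "{f tm, f (tm + r)} = {f tp, f tm}"
        using shift[of f, OF per] by auto
    qed (use True r \<open>r \<noteq> 0\<close> oint in \<open>auto simp: oint_via_arc_def\<close>)
  next
    case False
    show ?thesis
    proof (rule that[of "tm + r" "tm + 2*pi" "-1"])
      show "{f (tm + r), f (tm + 2*pi)} = {f tp, f tm}"
        using shift[of f, OF per] per[of tm] by auto
      show "oint_via_arc tm tp (-1) (tm + r) (tm + 2*pi)"
        using oint period by (simp add: oint_via_arc_def eq_neg_iff_add_eq_0)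
    qed (use False r in auto)
  qed
qed

lemma abs_sub_le_sq_div_abs_add:
  fixes x \<delta> :: real
  assumes "\<delta> > 0"
  shows "\<bar>x\<bar> - \<delta> \<le> x\<^sup>2 / (\<bar>x\<bar> + \<delta>)"
proof -
  have "(\<bar>x\<bar> - \<delta>) * (\<bar>x\<bar> + \<delta>) \<le> x\<^sup>2"
    by (simp add: algebra_simps power2_eq_square)
  then show ?thesis
    using assms by (simp add: pos_le_divide_eq add_nonneg_pos)
qed

lemma integral_abs_le_smoothed:
  fixes p :: "real \<Rightarrow> real"
  assumes p: "continuous_on UNIV p" and "a \<le> b" and \<delta>: "\<delta> > 0"
  shows "integral {a..b} (\<lambda>t. \<bar>p t\<bar>) - \<delta> * (b - a) \<le> integral {a..b} (\<lambda>t. (p t)\<^sup>2 / (\<bar>p t\<bar> + \<delta>))"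
proof -
  have den: "\<bar>p t\<bar> + \<delta> \<noteq> 0" for t
    using \<delta> by (metis abs_ge_zero add_nonneg_pos less_irrefl)
  have "integral {a..b} (\<lambda>t. \<bar>p t\<bar>) - \<delta> * (b - a) = integral {a..b} (\<lambda>t. \<bar>p t\<bar> - \<delta>)"
    using assms(2) by (subst integral_diff) (auto intro: integrable_continuous_UNIV continuous_intros p)
  also have "\<dots> \<le> integral {a..b} (\<lambda>t. (p t)\<^sup>2 / (\<bar>p t\<bar> + \<delta>))"
    using abs_sub_le_sq_div_abs_add[OF \<delta>]
    by (intro integral_le integrable_continuous_UNIV continuous_intros p) (simp_all add: den)
  finally show ?thesis .
qed

lemma le_of_forall_pos_approx:
  fixes \<epsilon> I L X :: real
  assumes "\<epsilon> > 0" "L \<ge> 0" "\<And>\<delta>. \<delta> > 0 \<Longrightarrow> \<epsilon> * (I - \<delta> * L) \<le> X"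
  shows "\<epsilon> * I \<le> X"
proof (rule field_le_epsilon)
  fix e :: real
  assume "e > 0"
  define \<delta> where "\<delta> = e / (\<epsilon> * L + 1)"
  have pos: "\<epsilon> * L + 1 > 0"
    using assms(1,2) by (simp add: add_nonneg_pos)
  have "\<epsilon> * (\<delta> * L) = e * (\<epsilon> * L / (\<epsilon> * L + 1))"
    by (simp add: \<delta>_def)
  also have "\<dots> \<le> e * 1"
    using pos \<open>e > 0\<close> by (intro mult_left_mono) auto
  finally show "\<epsilon> * I \<le> X + e"
    using assms(3)[of \<delta>] pos \<open>e > 0\<close> by (simp add: \<delta>_def algebra_simps)
qed

section \<open>Norms on the plane\<close>

context
  fixes N :: "complex \<Rightarrow> real"
  assumes N: "is_norm N"
begin

lemma is_norm_nonneg: "0 \<le> N x"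
  using N by (auto simp: is_norm_def)

lemma is_norm_eq_0_iff: "N x = 0 \<longleftrightarrow> x = 0"
  using N by (auto simp: is_norm_def)

lemma is_norm_scale: "N (of_real c * x) = \<bar>c\<bar> * N x"
  using N by (auto simp: is_norm_def)

lemma is_norm_triangle: "N (x + y) \<le> N x + N y"
  using N by (auto simp: is_norm_def)

lemma is_norm_reverse_triangle: "\<bar>N x - N y\<bar> \<le> N (x - y)"
  using is_norm_triangle[of "x - y" y] is_norm_triangle[of "y - x" x] is_norm_scale[of "-1" "x - y"]
  by (auto simp: abs_le_iff)

lemma is_norm_lincomb_le: "N (of_real a * u + of_real b * v) \<le> \<bar>a\<bar> * N u + \<bar>b\<bar> * N v"
  using is_norm_triangle[of "of_real a * u" "of_real b * v"] by (simp only: is_norm_scale)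

lemma is_norm_le_cmod: obtains K where "K > 0" "\<And>x. N x \<le> K * cmod x"
proof
  show "N 1 + N \<i> > 0"
    using is_norm_nonneg[of \<i>] is_norm_nonneg[of 1] is_norm_eq_0_iff[of 1] by (simp add: less_le add_pos_nonneg)
  fix x
  have "x = of_real (Re x) * 1 + of_real (Im x) * \<i>"
    by (simp add: complex_eq_iff)
  then have "N x = N (of_real (Re x) * 1 + of_real (Im x) * \<i>)"
    by simp
  also have "\<dots> \<le> \<bar>Re x\<bar> * N 1 + \<bar>Im x\<bar> * N \<i>"
    by (rule is_norm_lincomb_le)
  also have "\<dots> \<le> cmod x * N 1 + cmod x * N \<i>"
    using is_norm_nonneg[of 1] is_norm_nonneg[of \<i>] abs_Re_le_cmod abs_Im_le_cmod
    by (intro add_mono mult_right_mono) auto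
  finally show "N x \<le> (N 1 + N \<i>) * cmod x"
    by (simp add: algebra_simps)
qed

lemma continuous_on_is_norm: "continuous_on UNIV N"
proof -
  obtain K where K: "K > 0" "\<And>x. N x \<le> K * cmod x"
    using is_norm_le_cmod by blast
  have "K-lipschitz_on UNIV N"
    using order_trans[OF is_norm_reverse_triangle K(2)] K(1)
    by (auto simp: lipschitz_on_def dist_norm)
  then show ?thesis
    by (rule lipschitz_on_continuous_on)
qed

lemma continuous_on_is_norm_compose:
  "continuous_on S f \<Longrightarrow> continuous_on S (\<lambda>x. N (f x))"
  using continuous_on_compose2[OF continuous_on_is_norm] by auto

end

lemma strictly_convex_norm_open_segment:
  assumes N: "is_norm N" "strictly_convex_norm N"
    and "N u = 1" "N v = 1" "x \<in> open_segment u v"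
  shows "N x < 1"
proof -
  obtain th where th: "0 < th" "th < 1" "x = of_real (1 - th) * u + of_real th * v" and "u \<noteq> v"
    using assms(5) by (auto simp: in_segment scaleR_conv_of_real)
  have mid: "N ((u + v) / 2) < 1"
    using N(2) assms(3,4) \<open>u \<noteq> v\<close> by (auto simp: strictly_convex_norm_def)
  show ?thesis
  proof (cases "th \<le> 1/2")
    case True
    have "x = of_real (1 - 2*th) * u + of_real (2*th) * ((u + v) / 2)"
      unfolding th(3) by (simp add: field_simps)
    then have "N x \<le> (1 - 2*th) * N u + 2*th * N ((u + v) / 2)"
      using is_norm_lincomb_le[OF N(1), of "1 - 2*th" u "2*th" "(u + v) / 2"] True th by simp
    also have "\<dots> < (1 - 2*th) * N u + 2*th * 1"
      using mid th by (intro add_strict_left_mono mult_strict_left_mono) auto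
    also have "\<dots> = 1"
      using assms(3) by simp
    finally show ?thesis .
  next
    case False
    have "x = of_real (2 - 2*th) * ((u + v) / 2) + of_real (2*th - 1) * v"
      unfolding th(3) by (simp add: field_simps)
    then have "N x \<le> (2 - 2*th) * N ((u + v) / 2) + (2*th - 1) * N v"
      using is_norm_lincomb_le[OF N(1), of "2 - 2*th" "(u + v) / 2" "2*th - 1" v] False th by simp
    also have "\<dots> < (2 - 2*th) * 1 + (2*th - 1) * N v"
      using mid th by (intro add_strict_right_mono mult_strict_left_mono) auto
    also have "\<dots> = 1"
      using assms(4) by simp
    finally show ?thesis .
  qed
qed

lemma strictly_convex_norm_not_collinear:
  assumes N: "is_norm N" "strictly_convex_norm N"
    and "N x = 1" "N y = 1" "N z = 1" "x \<noteq> y" "y \<noteq> z" "x \<noteq> z"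
  shows "\<not> collinear {x, y, z}"
proof
  assume "collinear {x, y, z}"
  then have "x \<in> open_segment y z \<or> y \<in> open_segment z x \<or> z \<in> open_segment x y"
    using assms(6-8) by (auto simp: collinear_between_cases between_mem_segment open_segment_def)
  then show False
    using strictly_convex_norm_open_segment[OF N] assms(3-5) by fastforce
qed

lemma collinear_subset_line:
  fixes b :: complex
  assumes "b \<noteq> 0" "S \<subseteq> {z. b \<bullet> z = r}"
  shows "collinear S"
proof -
  have "aff_dim S \<le> aff_dim {z. b \<bullet> z = r}"
    using assms(2) by (rule aff_dim_subset)
  also have "\<dots> = 1"
    using aff_dim_hyperplane[OF assms(1), of r] by simp
  finally show ?thesis
    by (simp add: collinear_aff_dim)
qed

lemma orthonormal_frame_decomp:
  assumes "cmod v = 1"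
  shows "z = of_real (z \<bullet> v) * v + of_real (z \<bullet> (\<i> * v)) * (\<i> * v)"
proof -
  have v: "(Re v)\<^sup>2 + (Im v)\<^sup>2 = 1"
    using assms by (simp add: cmod_def)
  have "Re (of_real (z \<bullet> v) * v + of_real (z \<bullet> (\<i> * v)) * (\<i> * v)) = Re z * ((Re v)\<^sup>2 + (Im v)\<^sup>2)"
    "Im (of_real (z \<bullet> v) * v + of_real (z \<bullet> (\<i> * v)) * (\<i> * v)) = Im z * ((Re v)\<^sup>2 + (Im v)\<^sup>2)"
    by (simp_all add: inner_complex_def algebra_simps power2_eq_square)
  then show ?thesis
    by (simp add: complex_eq_iff v)
qed

lemma cmod_nu: "zp \<noteq> zm \<Longrightarrow> cmod (nu zp zm) = 1"
  by (simp add: nu_def norm_mult norm_divide)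

lemma inner_diff_nu: "(zp - zm) \<bullet> nu zp zm = 0"
proof -
  have "nu zp zm = (1 / cmod (zp - zm)) *\<^sub>R (\<i> * (zp - zm))"
    by (simp add: nu_def scaleR_conv_of_real divide_inverse mult.commute)
  moreover have "(zp - zm) \<bullet> (\<i> * (zp - zm)) = 0"
    by (simp add: inner_complex_def algebra_simps)
  ultimately show ?thesis
    by (simp add: inner_scaleR_right)
qed

lemma is_norm_sq_defect_on_line:
  assumes N: "is_norm N" and K: "\<And>x. N x \<le> K * cmod x"
    and "N y = 1" "cmod v = 1"
  shows "\<bar>1 - (N (of_real a * v + of_real (y \<bullet> (\<i> * v)) * (\<i> * v)))\<^sup>2\<bar>
           \<le> K * \<bar>y \<bullet> v - a\<bar> * (2 + K * \<bar>y \<bullet> v - a\<bar>)"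
proof -
  define x where "x = of_real a * v + of_real (y \<bullet> (\<i> * v)) * (\<i> * v)"
  have yx: "y - x = of_real (y \<bullet> v - a) * v"
    using orthonormal_frame_decomp[OF assms(4), of y] by (simp add: x_def algebra_simps)
  have "\<bar>1 - N x\<bar> = \<bar>N y - N x\<bar>"
    using assms(3) by simp
  also have "\<dots> \<le> N (y - x)"
    by (rule is_norm_reverse_triangle[OF N])
  also have "\<dots> = \<bar>y \<bullet> v - a\<bar> * N v"
    unfolding yx by (rule is_norm_scale[OF N])
  also have "\<dots> \<le> K * \<bar>y \<bullet> v - a\<bar>"
    using K[of v] assms(4) by (simp add: mult_right_mono mult.commute)
  finally have near: "\<bar>1 - N x\<bar> \<le> K * \<bar>y \<bullet> v - a\<bar>" .
  have "1 - (N x)\<^sup>2 = (1 - N x) * (1 + N x)"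
    by (simp add: power2_eq_square algebra_simps)
  then have "\<bar>1 - (N x)\<^sup>2\<bar> = \<bar>1 - N x\<bar> * (1 + N x)"
    using is_norm_nonneg[OF N, of x] by (simp add: abs_mult)
  also have "\<dots> \<le> K * \<bar>y \<bullet> v - a\<bar> * (2 + K * \<bar>y \<bullet> v - a\<bar>)"
    using near is_norm_nonneg[OF N, of x] by (intro mult_mono) auto
  finally show ?thesis
    unfolding x_def .
qed

section \<open>Bumps and moments\<close>

definition bump :: "real \<Rightarrow> real \<Rightarrow> real" where
  "bump c t = max 0 (cos (t - c) - cos (pi/4))"

definition affine_form :: "real \<times> complex \<Rightarrow> complex \<Rightarrow> real" where
  "affine_form b z = fst b + snd b \<bullet> z"

definition moments :: "(real \<Rightarrow> complex) \<Rightarrow> real \<Rightarrow> real \<times> complex \<Rightarrow> real \<times> complex" where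
  "moments \<gamma> c b = (integral {0..2*pi} (\<lambda>t. bump c t * affine_form b (\<gamma> t)),
                    integral {0..2*pi} (\<lambda>t. (bump c t * affine_form b (\<gamma> t)) *\<^sub>R \<gamma> t))"

lemma continuous_on_bump [continuous_intros]: "continuous_on S (bump c)"
  unfolding bump_def by (intro continuous_intros)

lemma bump_nonneg: "0 \<le> bump c t"
  by (simp add: bump_def)

lemma bump_le_1: "bump c t \<le> 1"
proof -
  have "0 < cos (pi/4)"
    by (simp add: cos_45)
  then have "cos (t - c) - cos (pi/4) \<le> 1"
    using cos_le_one[of "t - c"] by linarith
  then show ?thesis
    by (simp add: bump_def)
qed

lemma bump_periodic: "bump c (t + 2*pi) = bump c t"
proof -
  have "t + 2*pi - c = (t - c) + 2*pi"
    by simp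
  then show ?thesis
    by (simp only: bump_def cos_periodic)
qed

lemma bump_shift_of_int: "bump (c + 2 * pi * of_int k) = bump c"
proof
  fix t
  have "cos (t - c + 2 * pi * of_int (- k)) = cos (t - c)"
    by (rule periodic_add_of_int) simp
  then show "bump (c + 2 * pi * of_int k) t = bump c t"
    by (simp add: bump_def algebra_simps)
qed

lemma bump_pos: "\<bar>x\<bar> < pi/4 \<Longrightarrow> 0 < bump c (c + x)"
  using cos_monotone_0_pi[of "\<bar>x\<bar>" "pi/4"] by (simp add: bump_def)

lemma bump_eq_0:
  assumes "-3*pi/2 < t - c" "t - c \<le> -pi/4"
  shows "bump c t = 0"
proof -
  have "cos (t - c) \<le> cos (pi/4)"
  proof (cases "t - c \<ge> -pi")
    case True
    then have "cos (-(t - c)) \<le> cos (pi/4)"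
      using assms by (intro cos_monotone_0_pi_le) auto
    then show ?thesis
      by (simp only: cos_minus)
  next
    case False
    then have "0 < cos (t - c + pi)"
      using assms by (intro cos_gt_zero_pi) auto
    moreover have "0 < cos (pi/4)"
      by (simp add: cos_45)
    ultimately show ?thesis
      by simp
  qed
  then show ?thesis
    by (simp add: bump_def)
qed

lemma bump_center_before:
  obtains k :: int where "\<And>t. t \<in> {be - pi..be} \<Longrightarrow> bump (of_int k * pi/4) t = 0"
proof
  define k where "k = \<lceil>(be + pi/4) / (pi/4)\<rceil>"
  have "(be + pi/4) / (pi/4) \<le> of_int k" "of_int k < (be + pi/4) / (pi/4) + 1"
    unfolding k_def by linarith+
  then have "be + pi/4 \<le> of_int k * pi/4" "of_int k * pi/4 < be + pi/2"
    by (simp_all add: field_simps)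
  then show "bump (of_int k * pi/4) t = 0" if "t \<in> {be - pi..be}" for t
    using that by (intro bump_eq_0) auto
qed

lemma affine_form_add: "affine_form (b + b') z = affine_form b z + affine_form b' z"
  by (simp add: affine_form_def inner_add_left)

lemma affine_form_scaleR: "affine_form (r *\<^sub>R b) z = r * affine_form b z"
  by (simp add: affine_form_def algebra_simps)

lemma continuous_on_affine_form [continuous_intros]:
  "continuous_on S f \<Longrightarrow> continuous_on S (\<lambda>t. affine_form b (f t))"
  unfolding affine_form_def by (intro continuous_intros)

lemma abs_affine_form_le: "\<bar>affine_form b z\<bar> \<le> norm b * (1 + cmod z)"
proof -
  have "\<bar>affine_form b z\<bar> \<le> \<bar>fst b\<bar> + cmod (snd b) * cmod z"
    unfolding affine_form_def using Cauchy_Schwarz_ineq2[of "snd b" z] by linarith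
  also have "\<dots> \<le> norm b + norm b * cmod z"
    using norm_fst_le[of "fst b" "snd b"] norm_snd_le[of "snd b" "fst b"]
    by (intro add_mono mult_right_mono) auto
  finally show ?thesis
    by (simp add: algebra_simps)
qed

definition admissible_derivative :: "(real \<Rightarrow> complex) \<Rightarrow> (real \<Rightarrow> real) \<Rightarrow> bool" where
  "admissible_derivative \<gamma> \<mu> \<longleftrightarrow> continuous_on UNIV \<mu> \<and> (\<forall>t. \<mu> (t + 2*pi) = \<mu> t)
     \<and> (\<forall>t. \<bar>\<mu> t\<bar> \<le> 1) \<and> integral {0..2*pi} \<mu> = 0
     \<and> integral {0..2*pi} (\<lambda>t. \<mu> t *\<^sub>R \<gamma> t) = 0"

definition extension_constant :: "(real \<Rightarrow> complex) \<Rightarrow> real \<Rightarrow> bool" where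
  "extension_constant \<gamma> \<epsilon> \<longleftrightarrow> \<epsilon> > 0 \<and> (\<forall>w al be. continuous_on UNIV w \<longrightarrow> (\<forall>t. w (t + 2*pi) = w t)
     \<longrightarrow> (\<forall>t. \<bar>w t\<bar> \<le> 1) \<longrightarrow> be - pi \<le> al
     \<longrightarrow> (\<exists>\<mu>. admissible_derivative \<gamma> \<mu> \<and> (\<forall>t\<in>{al..be}. \<mu> t = \<epsilon> * w t)))"

lemma extension_constantD:
  fixes w :: "real \<Rightarrow> real"
  assumes "extension_constant \<gamma> \<epsilon>" "continuous_on UNIV w" "\<And>t. w (t + 2*pi) = w t"
    "\<And>t. \<bar>w t\<bar> \<le> 1" "be - pi \<le> al"
  obtains \<mu> where "admissible_derivative \<gamma> \<mu>" "\<And>t. t \<in> {al..be} \<Longrightarrow> \<mu> t = \<epsilon> * w t"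
  using assms unfolding extension_constant_def by metis

section \<open>Arc-length parametrisations of the unit circle\<close>

locale arclength_curve =
  fixes N :: "complex \<Rightarrow> real" and \<gamma> :: "real \<Rightarrow> complex"
  assumes N: "is_norm N" and \<gamma>: "ccw_arclength_param N \<gamma>"
begin

abbreviation tangent :: "real \<Rightarrow> complex" where
  "tangent t \<equiv> vector_derivative \<gamma> (at t)"

lemma curve_periodic: "\<gamma> (t + 2*pi) = \<gamma> t"
  using \<gamma> by (simp add: ccw_arclength_param_def)

lemma curve_has_tangent: "(\<gamma> has_vector_derivative tangent t) (at t)"
  using \<gamma> by (simp add: ccw_arclength_param_def)

lemma continuous_on_tangent: "continuous_on UNIV tangent"
  using \<gamma> by (simp add: ccw_arclength_param_def)

lemma cmod_tangent: "cmod (tangent t) = 1"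
  using \<gamma> by (simp add: ccw_arclength_param_def)

lemma continuous_on_curve: "continuous_on UNIV \<gamma>"
  by (rule continuous_at_imp_continuous_on) (use curve_has_tangent has_vector_derivative_continuous in blast)

lemma continuous_on_curve_compose [continuous_intros]:
  "continuous_on S f \<Longrightarrow> continuous_on S (\<lambda>x. \<gamma> (f x))"
  "continuous_on S f \<Longrightarrow> continuous_on S (\<lambda>x. tangent (f x))"
  using continuous_on_compose2[OF continuous_on_curve] continuous_on_compose2[OF continuous_on_tangent]
  by auto

lemma tangent_periodic: "tangent (t + 2*pi) = tangent t"
proof -
  have "((\<gamma> \<circ> (\<lambda>s. s + 2*pi)) has_vector_derivative (1 *\<^sub>R tangent (t + 2*pi))) (at t)"
    by (rule vector_diff_chain_at) (auto intro!: derivative_eq_intros curve_has_tangent)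
  moreover have "\<gamma> \<circ> (\<lambda>s. s + 2*pi) = \<gamma>"
    by (auto simp: curve_periodic)
  ultimately show ?thesis
    using vector_derivative_at by fastforce
qed

lemma curve_on_unit_circle: "N (\<gamma> t) = 1"
proof -
  have "\<gamma> (t rmod (2*pi)) \<in> frontier (unitball N)"
    using \<gamma> rmod_2pi_bounds[of t] unfolding ccw_arclength_param_def by blast
  then have "\<gamma> t \<in> frontier (unitball N)"
    by (simp add: periodic_rmod curve_periodic)
  moreover have "open (unitball N)"
    unfolding unitball_def by (rule open_Collect_less) (auto intro: continuous_on_is_norm[OF N])
  moreover have "closure (unitball N) \<subseteq> {z. N z \<le> 1}"
    by (rule closure_minimal) (auto simp: unitball_def intro!: closed_Collect_le continuous_on_is_norm[OF N])
  ultimately show ?thesis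
    by (auto simp: frontier_def unitball_def interior_open)
qed

lemma curve_bounded: obtains R where "R > 0" "\<And>t. cmod (\<gamma> t) \<le> R"
proof -
  have "compact (\<gamma> ` {0..2*pi})"
    by (intro compact_continuous_image continuous_on_subset[OF continuous_on_curve]) auto
  then obtain R where R: "R > 0" "\<And>x. x \<in> \<gamma> ` {0..2*pi} \<Longrightarrow> cmod x \<le> R"
    by (meson compact_imp_bounded bounded_pos)
  show ?thesis
  proof (rule that[OF R(1)])
    fix t
    have "cmod (\<gamma> (t rmod (2*pi))) \<le> R"
      using R(2) rmod_2pi_bounds[of t] by auto
    then show "cmod (\<gamma> t) \<le> R"
      by (simp add: periodic_rmod curve_periodic)
  qed
qed

lemma curve_chord_bounded:
  obtains M where "M > 0" "\<And>s t v. cmod v = 1 \<Longrightarrow> \<bar>(\<gamma> t - \<gamma> s) \<bullet> v\<bar> \<le> M"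
proof -
  obtain R where R: "R > 0" "\<And>t. cmod (\<gamma> t) \<le> R"
    using curve_bounded by blast
  show ?thesis
  proof (rule that[of "2 * R"])
    fix s t :: real and v :: complex
    assume "cmod v = 1"
    then show "\<bar>(\<gamma> t - \<gamma> s) \<bullet> v\<bar> \<le> 2 * R"
      using Cauchy_Schwarz_ineq2[of "\<gamma> t - \<gamma> s" v] norm_triangle_ineq4[of "\<gamma> t" "\<gamma> s"] R(2)[of s] R(2)[of t]
      by simp
  qed (use R in simp)
qed

lemma curve_inj_short:
  assumes "s \<noteq> t" "\<bar>s - t\<bar> < 2*pi"
  shows "\<gamma> s \<noteq> \<gamma> t"
proof
  assume "\<gamma> s = \<gamma> t"
  then have "\<gamma> (s rmod (2*pi)) = \<gamma> (t rmod (2*pi))"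
    by (simp add: periodic_rmod curve_periodic)
  then have "[s = t] (rmod (2*pi))"
    using \<gamma> rmod_2pi_bounds unfolding rcong_def ccw_arclength_param_def inj_on_def by blast
  then obtain n :: int where n: "t = s + of_int n * (2*pi)"
    by (auto simp: rcong_altdef)
  then have "n \<noteq> 0"
    using assms(1) by auto
  then have "2*pi * 1 \<le> 2*pi * \<bar>of_int n\<bar>"
    by (intro mult_left_mono) auto
  then show False
    using n assms(2) by (simp add: abs_mult)
qed

lemma has_real_derivative_curve_inner:
  "((\<lambda>t. (\<gamma> t - z) \<bullet> v) has_real_derivative (tangent t \<bullet> v)) (at t)"
proof -
  have "((\<lambda>t. (\<gamma> t - z) \<bullet> v) has_derivative (\<lambda>h. (h *\<^sub>R tangent t) \<bullet> v)) (at t)"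
    using curve_has_tangent[of t] unfolding has_vector_derivative_def
    by (auto intro!: derivative_eq_intros)
  moreover have "(\<lambda>h. (h *\<^sub>R tangent t) \<bullet> v) = (*) (tangent t \<bullet> v)"
    by auto
  ultimately show ?thesis
    by (simp add: has_field_derivative_def)
qed

lemma antiderivative_in_Lambda_star:
  assumes "admissible_derivative \<gamma> \<mu>"
  shows "(\<lambda>t. oint 0 t \<mu>) \<in> Lambda_star \<gamma>"
proof -
  define lam where "lam t = oint 0 t \<mu>" for t
  have \<mu>: "continuous_on UNIV \<mu>" "\<And>t. \<mu> (t + 2*pi) = \<mu> t" "\<And>t. \<bar>\<mu> t\<bar> \<le> 1"
    "integral {0..2*pi} \<mu> = 0" "integral {0..2*pi} (\<lambda>t. \<mu> t *\<^sub>R \<gamma> t) = 0"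
    using assms by (auto simp: admissible_derivative_def)
  have "(\<lambda>t. \<mu> t *\<^sub>R \<gamma> t) integrable_on {0..2*pi}"
    by (intro integrable_continuous_UNIV continuous_intros \<mu>(1))
  then have \<mu>\<gamma>: "((\<lambda>t. \<mu> t *\<^sub>R \<gamma> t) has_integral 0) {0..2*pi}"
    using \<mu>(5) by (metis integrable_integral)
  have lam: "(lam has_real_derivative \<mu> t) (at t)" for t
    unfolding lam_def by (rule has_real_derivative_oint[OF \<mu>(1)])
  have lam_periodic: "lam (t + 2*pi) = lam t" for t
    unfolding lam_def by (rule oint_periodic[OF \<mu>(1,2,4)])
  have "lam 0 = 0" "lam (2*pi) = 0"
    using lam_periodic[of 0] by (auto simp: lam_def oint_def)
  \<comment> \<open>integration by parts against \<open>\<gamma>\<close> turns the moment condition on \<open>\<mu>\<close> into the one on \<open>lam\<close>\<close>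
  moreover have "((\<lambda>t. lam t *\<^sub>R tangent t + \<mu> t *\<^sub>R \<gamma> t) has_integral
      (lam (2*pi) *\<^sub>R \<gamma> (2*pi) - lam 0 *\<^sub>R \<gamma> 0)) {0..2*pi}"
    by (rule fundamental_theorem_of_calculus)
       (auto intro: has_vector_derivative_at_within has_vector_derivative_scaleR[OF lam curve_has_tangent])
  ultimately have "((\<lambda>t. lam t *\<^sub>R tangent t + \<mu> t *\<^sub>R \<gamma> t) has_integral 0) {0..2*pi}"
    by simp
  from has_integral_diff[OF this \<mu>\<gamma>]
  have "integral {0..2*pi} (\<lambda>t. lam t *\<^sub>R tangent t) = 0"
    by (simp add: integral_unique)
  moreover have "deriv lam = \<mu>"
    using lam DERIV_imp_deriv by blast
  moreover have "lam differentiable (at t)" for t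
    using lam[of t] by (auto simp: real_differentiable_def)
  ultimately show ?thesis
    unfolding Lambda_star_def lam_def[symmetric] using lam_periodic \<mu>(1,3) by simp
qed

lemma moments_linear: "linear (moments \<gamma> c)"
proof (rule linearI)
  have int: "(\<lambda>t. bump c t * affine_form b (\<gamma> t)) integrable_on {0..2*pi}"
    "(\<lambda>t. (bump c t * affine_form b (\<gamma> t)) *\<^sub>R \<gamma> t) integrable_on {0..2*pi}" for b
    by (intro integrable_continuous_UNIV continuous_intros)+
  show "moments \<gamma> c (b + b') = moments \<gamma> c b + moments \<gamma> c b'" for b b'
    unfolding moments_def using integral_add[OF int(1)[of b] int(1)[of b']]
      integral_add[OF int(2)[of b] int(2)[of b']]
    by (simp add: affine_form_add algebra_simps scaleR_add_left)
  fix r b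
  have "(\<lambda>t. bump c t * affine_form (r *\<^sub>R b) (\<gamma> t)) = (\<lambda>t. r * (bump c t * affine_form b (\<gamma> t)))"
    "(\<lambda>t. (bump c t * affine_form (r *\<^sub>R b) (\<gamma> t)) *\<^sub>R \<gamma> t)
       = (\<lambda>t. r *\<^sub>R ((bump c t * affine_form b (\<gamma> t)) *\<^sub>R \<gamma> t))"
    by (simp_all add: affine_form_scaleR algebra_simps)
  then show "moments \<gamma> c (r *\<^sub>R b) = r *\<^sub>R moments \<gamma> c b"
    by (simp only: moments_def integral_mult_right integral_cmul scaleR_Pair real_scaleR_def)
qed

lemma inner_moments:
  "fst b * fst (moments \<gamma> c b) + snd b \<bullet> snd (moments \<gamma> c b)
     = integral {0..2*pi} (\<lambda>t. bump c t * (affine_form b (\<gamma> t))\<^sup>2)"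
proof -
  define F where "F t = bump c t * affine_form b (\<gamma> t)" for t
  have int: "F integrable_on {0..2*pi}" "(\<lambda>t. F t *\<^sub>R \<gamma> t) integrable_on {0..2*pi}"
    unfolding F_def by (intro integrable_continuous_UNIV continuous_intros)+
  have "integral {0..2*pi} (\<lambda>t. bump c t * (affine_form b (\<gamma> t))\<^sup>2)
      = integral {0..2*pi} (\<lambda>t. fst b * F t + ((\<lambda>x. snd b \<bullet> x) \<circ> (\<lambda>t. F t *\<^sub>R \<gamma> t)) t)"
    by (rule integral_cong) (simp add: F_def affine_form_def power2_eq_square algebra_simps)
  also have "\<dots> = integral {0..2*pi} (\<lambda>t. fst b * F t)
      + integral {0..2*pi} ((\<lambda>x. snd b \<bullet> x) \<circ> (\<lambda>t. F t *\<^sub>R \<gamma> t))"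
    by (intro integral_add integrable_linear[OF int(2)] bounded_linear_inner_right)
       (unfold F_def, intro integrable_continuous_UNIV continuous_intros)
  also have "\<dots> = fst b * integral {0..2*pi} F + snd b \<bullet> integral {0..2*pi} (\<lambda>t. F t *\<^sub>R \<gamma> t)"
    by (simp only: integral_mult_right integral_linear[OF int(2) bounded_linear_inner_right])
  finally show ?thesis
    by (simp add: moments_def F_def[abs_def])
qed

lemma admissible_derivative_correction:
  fixes w :: "real \<Rightarrow> real"
  assumes w: "continuous_on UNIV w" "\<And>t. w (t + 2*pi) = w t"
    and b: "moments \<gamma> c b = (integral {0..2*pi} w, integral {0..2*pi} (\<lambda>t. w t *\<^sub>R \<gamma> t))"
    and bound: "\<And>t. \<bar>w t - bump c t * affine_form b (\<gamma> t)\<bar> \<le> 1"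
  shows "admissible_derivative \<gamma> (\<lambda>t. w t - bump c t * affine_form b (\<gamma> t))"
proof -
  define F where "F t = bump c t * affine_form b (\<gamma> t)" for t
  have F: "continuous_on UNIV F" "continuous_on UNIV (\<lambda>t. F t *\<^sub>R \<gamma> t)"
    unfolding F_def by (intro continuous_intros)+
  have "integral {0..2*pi} (\<lambda>t. w t - F t) = integral {0..2*pi} w - integral {0..2*pi} F"
    by (intro integral_diff integrable_continuous_UNIV w(1) F(1))
  moreover have "(\<lambda>t. (w t - F t) *\<^sub>R \<gamma> t) = (\<lambda>t. w t *\<^sub>R \<gamma> t - F t *\<^sub>R \<gamma> t)"
    by (simp add: scaleR_diff_left)
  then have "integral {0..2*pi} (\<lambda>t. (w t - F t) *\<^sub>R \<gamma> t)
      = integral {0..2*pi} (\<lambda>t. w t *\<^sub>R \<gamma> t) - integral {0..2*pi} (\<lambda>t. F t *\<^sub>R \<gamma> t)"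
    by (simp only:) (intro integral_diff integrable_continuous_UNIV continuous_intros w(1) F(2))
  moreover have "integral {0..2*pi} F = integral {0..2*pi} w"
    "integral {0..2*pi} (\<lambda>t. F t *\<^sub>R \<gamma> t) = integral {0..2*pi} (\<lambda>t. w t *\<^sub>R \<gamma> t)"
    using b by (simp_all add: moments_def F_def[abs_def])
  moreover have "continuous_on UNIV (\<lambda>t. w t - F t)"
    by (intro continuous_intros w(1) F(1))
  ultimately show ?thesis
    using w(2) bound unfolding admissible_derivative_def F_def
    by (simp add: bump_periodic curve_periodic)
qed

lemma norm_moment_pair_le:
  fixes w :: "real \<Rightarrow> real"
  assumes w: "continuous_on UNIV w" "\<And>t. \<bar>w t\<bar> \<le> r" and R: "\<And>t. cmod (\<gamma> t) \<le> R"
  shows "norm (integral {0..2*pi} w, integral {0..2*pi} (\<lambda>t. w t *\<^sub>R \<gamma> t)) \<le> r * (2*pi) * (1 + R)"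
proof -
  have "norm (w t) \<le> r" "norm (w t *\<^sub>R \<gamma> t) \<le> r * R" for t
    using w(2)[of t] mult_mono[OF w(2) R, of t t] by (auto simp: abs_mult)
  then have "norm (integral {0..2*pi} w) \<le> r * (2*pi - 0)"
    "norm (integral {0..2*pi} (\<lambda>t. w t *\<^sub>R \<gamma> t)) \<le> r * R * (2*pi - 0)"
    by (intro integral_bound continuous_on_subset[OF w(1)] continuous_intros; simp)+
  then show ?thesis
    using norm_Pair_le[of "integral {0..2*pi} w" "integral {0..2*pi} (\<lambda>t. w t *\<^sub>R \<gamma> t)"]
    by (simp add: algebra_simps)
qed

lemma abs_bump_affine_form_le:
  assumes "\<And>t. cmod (\<gamma> t) \<le> R"
  shows "\<bar>bump c t * affine_form b (\<gamma> t)\<bar> \<le> norm b * (1 + R)"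
proof -
  have "\<bar>affine_form b (\<gamma> t)\<bar> \<le> norm b * (1 + R)"
    using abs_affine_form_le[of b "\<gamma> t"] mult_left_mono[OF add_left_mono[OF assms[of t]], of "norm b" 1]
    by simp
  then show ?thesis
    using bump_le_1[of c t] bump_nonneg[of c t]
    by (simp add: abs_mult) (meson mult_left_le_one_le abs_ge_zero order_trans)
qed

lemma oint_chord_eq_arc_integral:
  fixes f :: "real \<Rightarrow> real"
  assumes f: "continuous_on UNIV f" and ab: "al \<le> be" and ends: "{\<gamma> al, \<gamma> be} = {zp, zm}"
  shows "\<bar>oint (zm \<bullet> u) (zp \<bullet> u) f\<bar> = \<bar>integral {al..be} (\<lambda>t. f (\<gamma> t \<bullet> u) * (tangent t \<bullet> u))\<bar>"
proof -
  define h where "h t = oint 0 (\<gamma> t \<bullet> u) f" for t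
  have "(h has_real_derivative f (\<gamma> t \<bullet> u) * (tangent t \<bullet> u)) (at t)" for t
    unfolding h_def
    by (rule DERIV_chain2[OF has_real_derivative_oint[OF f]])
       (use has_real_derivative_curve_inner[of 0] in simp)
  then have "integral {al..be} (\<lambda>t. f (\<gamma> t \<bullet> u) * (tangent t \<bullet> u)) = h be - h al"
    by (intro integral_unique has_integral_global_antiderivative ab)
  moreover have "\<bar>oint (zm \<bullet> u) (zp \<bullet> u) f\<bar> = \<bar>h be - h al\<bar>"
    using ends oint_eq_diff[OF f, of "zm \<bullet> u" "zp \<bullet> u"] by (auto simp: h_def doubleton_eq_iff)
  ultimately show ?thesis
    by simp
qed

lemma chord_integrand_le:
  assumes K: "K \<ge> 0" "\<And>x. N x \<le> K * cmod x" and v: "cmod v = 1" and d: "\<bar>\<gamma> t \<bullet> v - a\<bar> \<le> M"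
  shows "\<bar>(1 - (N (of_real a * v + of_real (\<gamma> t \<bullet> (\<i> * v)) * (\<i> * v)))\<^sup>2) * (tangent t \<bullet> (\<i> * v))\<bar>
           \<le> K * (2 + K * M) * \<bar>\<gamma> t \<bullet> v - a\<bar>"
proof -
  have "K * \<bar>\<gamma> t \<bullet> v - a\<bar> * (2 + K * \<bar>\<gamma> t \<bullet> v - a\<bar>) \<le> K * \<bar>\<gamma> t \<bullet> v - a\<bar> * (2 + K * M)"
    using K(1) d by (intro mult_left_mono add_left_mono) auto
  then have "\<bar>1 - (N (of_real a * v + of_real (\<gamma> t \<bullet> (\<i> * v)) * (\<i> * v)))\<^sup>2\<bar>
      \<le> K * (2 + K * M) * \<bar>\<gamma> t \<bullet> v - a\<bar>"
    using is_norm_sq_defect_on_line[OF N K(2) curve_on_unit_circle[of t] v, of a] by (simp add: mult_ac)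
  moreover have "\<bar>tangent t \<bullet> (\<i> * v)\<bar> \<le> 1"
    using Cauchy_Schwarz_ineq2[of "tangent t" "\<i> * v"] cmod_tangent[of t] v by (simp add: norm_mult)
  moreover have "K * (2 + K * M) * \<bar>\<gamma> t \<bullet> v - a\<bar> \<ge> 0"
    using K(1) d by simp
  ultimately show ?thesis
    unfolding abs_mult by (metis mult.right_neutral mult_mono abs_ge_zero)
qed

lemma c_1D_le_integral:
  assumes K: "K \<ge> 0" "\<And>x. N x \<le> K * cmod x"
    and M: "\<And>s t v. cmod v = 1 \<Longrightarrow> \<bar>(\<gamma> t - \<gamma> s) \<bullet> v\<bar> \<le> M"
    and ne: "zp \<noteq> zm" and ab: "al \<le> be" and ends: "{\<gamma> al, \<gamma> be} = {zp, zm}"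
  shows "c_1D N zp zm \<le> 2 * (K * (2 + K * M)) * integral {al..be} (\<lambda>t. \<bar>(\<gamma> t - zm) \<bullet> nu zp zm\<bar>)"
proof -
  define C where "C = K * (2 + K * M)"
  define v where "v = nu zp zm"
  define a where "a = zp \<bullet> v"
  define f where "f s = 1 - (N (of_real a * v + of_real s * (\<i> * v)))\<^sup>2" for s
  define p where "p t = (\<gamma> t - zm) \<bullet> v" for t
  have v: "cmod v = 1"
    using cmod_nu[OF ne] by (simp add: v_def)
  have p: "p t = \<gamma> t \<bullet> v - a" for t
    using inner_diff_nu[of zp zm] by (simp add: p_def a_def v_def inner_diff_left)
  have f: "continuous_on UNIV f"
    unfolding f_def by (intro continuous_intros continuous_on_is_norm_compose[OF N])
  obtain s0 where "zm = \<gamma> s0"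
    using ends by (auto simp: doubleton_eq_iff)
  then have "\<bar>p t\<bar> \<le> M" for t
    using M[where s = s0 and t = t, OF v] by (simp add: p_def)
  then have "norm (f (\<gamma> t \<bullet> (\<i> * v)) * (tangent t \<bullet> (\<i> * v))) \<le> C * \<bar>p t\<bar>" for t
    using chord_integrand_le[OF K v, of t a M] unfolding f_def p C_def by simp
  moreover have "continuous_on UNIV (\<lambda>t. f (\<gamma> t \<bullet> (\<i> * v)) * (tangent t \<bullet> (\<i> * v)))"
    by (intro continuous_intros continuous_on_compose2[OF f]) auto
  moreover have "continuous_on UNIV (\<lambda>t. C * \<bar>p t\<bar>)"
    unfolding p_def by (intro continuous_intros)
  ultimately have "norm (integral {al..be} (\<lambda>t. f (\<gamma> t \<bullet> (\<i> * v)) * (tangent t \<bullet> (\<i> * v))))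
      \<le> integral {al..be} (\<lambda>t. C * \<bar>p t\<bar>)"
    by (intro integral_norm_bound_integral integrable_continuous_UNIV)
  moreover have "c_1D N zp zm = 2 * \<bar>oint (zm \<bullet> (\<i> * v)) (zp \<bullet> (\<i> * v)) f\<bar>"
    by (simp add: c_1D_def Let_def f_def[abs_def] a_def v_def)
  ultimately show ?thesis
    using oint_chord_eq_arc_integral[OF f ab ends, of "\<i> * v"] by (simp add: C_def p_def v_def)
qed

lemma oint_Lambda_star_by_parts:
  assumes lam: "lam \<in> Lambda_star \<gamma>" and ab: "al \<le> be"
    and ends: "(\<gamma> al - z) \<bullet> v = 0" "(\<gamma> be - z) \<bullet> v = 0" and arc: "oint_via_arc tm tp s al be"
  shows "oint tm tp (\<lambda>t. lam t * (tangent t \<bullet> v))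
           = - s * integral {al..be} (\<lambda>t. deriv lam t * ((\<gamma> t - z) \<bullet> v))"
proof -
  have dlam: "(lam has_real_derivative deriv lam t) (at t)" for t
    using lam DERIV_deriv_iff_real_differentiable by (auto simp: Lambda_star_def)
  have cont: "continuous_on UNIV lam" "continuous_on UNIV (deriv lam)"
    using lam by (auto simp: Lambda_star_def intro!: continuous_at_imp_continuous_on DERIV_continuous dlam)
  have "integral {0..2*pi} ((\<lambda>x. x \<bullet> v) \<circ> (\<lambda>t. lam t *\<^sub>R tangent t)) = integral {0..2*pi} (\<lambda>t. lam t *\<^sub>R tangent t) \<bullet> v"
    by (intro integral_linear bounded_linear_inner_left integrable_continuous_UNIV continuous_intros cont)
  then have "integral {0..2*pi} (\<lambda>t. lam t * (tangent t \<bullet> v)) = 0"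
    using lam by (simp add: Lambda_star_def o_def)
  then have "oint tm tp (\<lambda>t. lam t * (tangent t \<bullet> v)) = s * integral {al..be} (\<lambda>t. lam t * (tangent t \<bullet> v))"
    using arc lam unfolding oint_via_arc_def
    by (intro arc[unfolded oint_via_arc_def, rule_format] continuous_intros cont)
       (auto simp: Lambda_star_def tangent_periodic)
  also have "integral {al..be} (\<lambda>t. lam t * (tangent t \<bullet> v)) = - integral {al..be} (\<lambda>t. deriv lam t * ((\<gamma> t - z) \<bullet> v))"
    by (rule integral_by_parts_vanishing_ends[OF ab dlam has_real_derivative_curve_inner cont(2) _ ends])
       (intro continuous_intros)
  finally show ?thesis
    by simp
qed

lemma bdd_above_oint_Lambda_star:
  assumes ab: "al \<le> be" and ends: "(\<gamma> al - z) \<bullet> v = 0" "(\<gamma> be - z) \<bullet> v = 0"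
    and arc: "oint_via_arc tm tp s al be" and s: "\<bar>s\<bar> = 1" and bound: "\<And>t. \<bar>(\<gamma> t - z) \<bullet> v\<bar> \<le> M"
  shows "bdd_above ((\<lambda>lam. oint tm tp (\<lambda>t. lam t * (tangent t \<bullet> v))) ` Lambda_star \<gamma>)"
proof (rule bdd_aboveI[where M = "M * (be - al)"], safe)
  fix lam
  assume lam: "lam \<in> Lambda_star \<gamma>"
  have dlam: "continuous_on UNIV (deriv lam)" "\<And>t. \<bar>deriv lam t\<bar> \<le> 1"
    using lam unfolding Lambda_star_def by blast+
  have cont: "continuous_on UNIV (\<lambda>t. deriv lam t * ((\<gamma> t - z) \<bullet> v))"
    by (intro continuous_intros dlam(1))
  have "norm (deriv lam t * ((\<gamma> t - z) \<bullet> v)) \<le> M" for t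
    using mult_mono[OF dlam(2) bound] by (simp add: abs_mult)
  then have "norm (integral {al..be} (\<lambda>t. deriv lam t * ((\<gamma> t - z) \<bullet> v))) \<le> M * (be - al)"
    by (rule integral_bound[OF ab continuous_on_subset[OF cont subset_UNIV]])
  then have "\<bar>oint tm tp (\<lambda>t. lam t * (tangent t \<bullet> v))\<bar> \<le> M * (be - al)"
    using oint_Lambda_star_by_parts[OF lam ab ends arc] s by (simp add: abs_mult)
  then show "oint tm tp (\<lambda>t. lam t * (tangent t \<bullet> v)) \<le> M * (be - al)"
    by (rule abs_le_D1)
qed

lemma Lambda_star_oint_eq_smoothed_distance:
  assumes \<epsilon>: "extension_constant \<gamma> \<epsilon>" and ab: "al \<le> be" "be - pi \<le> al" and s: "\<bar>s\<bar> = 1"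
    and ends: "(\<gamma> al - z) \<bullet> v = 0" "(\<gamma> be - z) \<bullet> v = 0" and arc: "oint_via_arc tm tp s al be"
    and \<delta>: "\<delta> > 0"
  shows "\<exists>lam\<in>Lambda_star \<gamma>. oint tm tp (\<lambda>t. lam t * (tangent t \<bullet> v))
           = \<epsilon> * integral {al..be} (\<lambda>t. ((\<gamma> t - z) \<bullet> v)\<^sup>2 / (\<bar>(\<gamma> t - z) \<bullet> v\<bar> + \<delta>))"
proof -
  define p where "p t = (\<gamma> t - z) \<bullet> v" for t
  \<comment> \<open>a continuous approximation of \<open>- s * sgn p\<close>\<close>
  define w where "w t = - s * p t / (\<bar>p t\<bar> + \<delta>)" for t
  have den: "\<bar>p t\<bar> + \<delta> \<noteq> 0" for t
    using \<delta> by (metis abs_ge_zero add_nonneg_pos less_irrefl)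
  have "continuous_on UNIV w"
    unfolding w_def p_def by (intro continuous_intros) (simp add: den[unfolded p_def])
  moreover have "w (t + 2*pi) = w t" for t
    by (simp add: w_def p_def curve_periodic)
  moreover have "\<bar>w t\<bar> \<le> 1" for t
    using \<delta> s by (simp add: w_def abs_mult abs_divide divide_le_eq_1 add_nonneg_pos)
  ultimately obtain \<mu> where \<mu>: "admissible_derivative \<gamma> \<mu>" "\<And>t. t \<in> {al..be} \<Longrightarrow> \<mu> t = \<epsilon> * w t"
    using extension_constantD[OF \<epsilon> _ _ _ ab(2)] by metis
  define lam where "lam t = oint 0 t \<mu>" for t
  have lam: "lam \<in> Lambda_star \<gamma>"
    unfolding lam_def by (rule antiderivative_in_Lambda_star[OF \<mu>(1)])
  have "continuous_on UNIV \<mu>"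
    using \<mu>(1) by (simp add: admissible_derivative_def)
  then have "deriv lam = \<mu>"
    unfolding lam_def by (intro ext DERIV_imp_deriv has_real_derivative_oint)
  then have "integral {al..be} (\<lambda>t. deriv lam t * p t)
      = integral {al..be} (\<lambda>t. - s * \<epsilon> * ((p t)\<^sup>2 / (\<bar>p t\<bar> + \<delta>)))"
    using \<mu>(2) by (intro integral_cong) (simp add: w_def power2_eq_square)
  also have "\<dots> = - s * \<epsilon> * integral {al..be} (\<lambda>t. (p t)\<^sup>2 / (\<bar>p t\<bar> + \<delta>))"
    by (rule integral_mult_right)
  finally have "oint tm tp (\<lambda>t. lam t * (tangent t \<bullet> v))
      = (s * s) * \<epsilon> * integral {al..be} (\<lambda>t. (p t)\<^sup>2 / (\<bar>p t\<bar> + \<delta>))"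
    using oint_Lambda_star_by_parts[OF lam ab(1) ends arc]
    by (simp only: p_def mult_minus_left minus_minus mult.assoc)
  also have "s * s = 1"
    using abs_mult_self_eq[of s] s by simp
  finally show ?thesis
    unfolding p_def using lam by auto
qed

lemma c_ENT_ge_integral:
  assumes \<epsilon>: "extension_constant \<gamma> \<epsilon>" and M: "\<And>s t v. cmod v = 1 \<Longrightarrow> \<bar>(\<gamma> t - \<gamma> s) \<bullet> v\<bar> \<le> M"
    and ne: "\<gamma> tp \<noteq> \<gamma> tm" and ab: "al \<le> be" "be - pi \<le> al" and s: "\<bar>s\<bar> = 1"
    and ends: "{\<gamma> al, \<gamma> be} = {\<gamma> tp, \<gamma> tm}" and arc: "oint_via_arc tm tp s al be"
  shows "\<epsilon> * integral {al..be} (\<lambda>t. \<bar>(\<gamma> t - \<gamma> tm) \<bullet> nu (\<gamma> tp) (\<gamma> tm)\<bar>) \<le> c_ENT \<gamma> tp tm"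
proof -
  define v where "v = nu (\<gamma> tp) (\<gamma> tm)"
  define p where "p t = (\<gamma> t - \<gamma> tm) \<bullet> v" for t
  define S where "S = (\<lambda>lam. oint tm tp (\<lambda>t. lam t * (tangent t \<bullet> v))) ` Lambda_star \<gamma>"
  have ends': "(\<gamma> al - \<gamma> tm) \<bullet> v = 0" "(\<gamma> be - \<gamma> tm) \<bullet> v = 0"
    using ends inner_diff_nu[of "\<gamma> tp" "\<gamma> tm"] by (auto simp: v_def doubleton_eq_iff)
  have "\<bar>(\<gamma> t - \<gamma> tm) \<bullet> v\<bar> \<le> M" for t
    using M cmod_nu[OF ne] by (simp add: v_def)
  then have bdd: "bdd_above S"
    unfolding S_def by (rule bdd_above_oint_Lambda_star[OF ab(1) ends' arc s])
  have p_cont: "continuous_on UNIV p"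
    unfolding p_def by (intro continuous_intros)
  have "\<epsilon> > 0"
    using \<epsilon> by (simp add: extension_constant_def)
  have approx: "\<epsilon> * (integral {al..be} (\<lambda>t. \<bar>p t\<bar>) - \<delta> * (be - al)) \<le> Sup S"
    if \<delta>: "\<delta> > 0" for \<delta>
  proof -
    obtain lam where lam: "lam \<in> Lambda_star \<gamma>" and eq:
      "oint tm tp (\<lambda>t. lam t * (tangent t \<bullet> v)) = \<epsilon> * integral {al..be} (\<lambda>t. (p t)\<^sup>2 / (\<bar>p t\<bar> + \<delta>))"
      using Lambda_star_oint_eq_smoothed_distance[OF \<epsilon> ab s ends' arc \<delta>] unfolding p_def by blast
    have "\<epsilon> * integral {al..be} (\<lambda>t. (p t)\<^sup>2 / (\<bar>p t\<bar> + \<delta>)) \<in> S"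
      using eq unfolding S_def by (rule image_eqI[OF sym lam])
    then have "\<epsilon> * integral {al..be} (\<lambda>t. (p t)\<^sup>2 / (\<bar>p t\<bar> + \<delta>)) \<le> Sup S"
      using bdd by (rule cSup_upper)
    moreover have "\<epsilon> * (integral {al..be} (\<lambda>t. \<bar>p t\<bar>) - \<delta> * (be - al))
        \<le> \<epsilon> * integral {al..be} (\<lambda>t. (p t)\<^sup>2 / (\<bar>p t\<bar> + \<delta>))"
      using integral_abs_le_smoothed[OF p_cont ab(1) \<delta>] \<open>\<epsilon> > 0\<close> by (intro mult_left_mono) auto
    ultimately show ?thesis
      by linarith
  qed
  have "\<epsilon> * integral {al..be} (\<lambda>t. \<bar>p t\<bar>) \<le> Sup S"
    using le_of_forall_pos_approx[OF \<open>\<epsilon> > 0\<close> _ approx] ab(1) by simp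
  then show ?thesis
    by (simp add: c_ENT_def S_def p_def v_def)
qed

end

section \<open>The moment system under strict convexity\<close>

locale strictly_convex_curve = arclength_curve +
  assumes strictly_convex: "strictly_convex_norm N"
begin

lemma moments_eq_0_imp_eq_0:
  assumes "moments \<gamma> c b = 0"
  shows "b = 0"
proof -
  define h where "h t = bump c t * (affine_form b (\<gamma> t))\<^sup>2" for t
  have cont: "continuous_on UNIV h"
    unfolding h_def by (intro continuous_intros)
  have "(h has_integral 0) (cbox 0 (2*pi))"
    using inner_moments[of b c] assms integrable_integral[OF integrable_continuous_UNIV[OF cont, of 0 "2*pi"]]
    by (simp add: h_def[abs_def])
  moreover have "box 0 (2*pi) \<noteq> {}"
    using pi_gt_zero by (simp add: box_ne_empty not_le)
  ultimately have zero: "h t = 0" if "t \<in> {0..2*pi}" for t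
    using that
    by (intro has_integral_0_cbox_imp_0[of 0 "2*pi" h] continuous_on_subset[OF cont])
      (auto simp: h_def bump_nonneg)
  have all_zero: "h t = 0" for t
  proof -
    have "h t = h (t rmod (2*pi))"
      by (rule periodic_rmod[symmetric]) (simp add: h_def bump_periodic curve_periodic)
    also have "\<dots> = 0"
      using rmod_2pi_bounds[of t] by (intro zero) auto
    finally show ?thesis .
  qed
  have on_arc: "affine_form b (\<gamma> (c + x)) = 0" if "\<bar>x\<bar> < pi/4" for x
    using bump_pos[OF that, of c] all_zero[of "c + x"] by (simp add: h_def)
  have "snd b = 0"
  proof (rule ccontr)
    assume "snd b \<noteq> 0"
    then have "collinear {\<gamma> (c + pi/8), \<gamma> (c + 0), \<gamma> (c + -pi/8)}"
      by (rule collinear_subset_line[where r = "- fst b"])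
        (use on_arc[of "pi/8"] on_arc[of 0] on_arc[of "-pi/8"] in \<open>auto simp: affine_form_def\<close>)
    moreover have "\<gamma> (c + pi/8) \<noteq> \<gamma> (c + 0)" "\<gamma> (c + 0) \<noteq> \<gamma> (c + -pi/8)"
      "\<gamma> (c + pi/8) \<noteq> \<gamma> (c + -pi/8)"
      by (intro curve_inj_short; simp)+
    ultimately show False
      using strictly_convex_norm_not_collinear[OF N strictly_convex curve_on_unit_circle
          curve_on_unit_circle curve_on_unit_circle] by blast
  qed
  then show "b = 0"
    using on_arc[of 0] by (simp add: affine_form_def prod_eq_iff)
qed

lemma moments_bounded_inverse:
  obtains B where "B > 0" "\<And>y. \<exists>b. moments \<gamma> c b = y \<and> norm b \<le> B * norm y"
proof -
  have "inj (moments \<gamma> c)"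
    using linear_injective_0[OF moments_linear] moments_eq_0_imp_eq_0 by blast
  then obtain g where g: "linear g" "\<And>y. moments \<gamma> c (g y) = y"
    using linear_injective_isomorphism[OF moments_linear] by blast
  obtain B where "B > 0" "\<And>y. norm (g y) \<le> B * norm y"
    using linear_bounded_pos[OF g(1)] by blast
  then show ?thesis
    using that g(2) by blast
qed

lemma moments_uniform_bounded_inverse:
  obtains B where "B > 0" "\<And>k y. \<exists>b. moments \<gamma> (of_int k * pi/4) b = y \<and> norm b \<le> B * norm y"
proof -
  have "\<forall>k\<in>{0..<8::int}. \<exists>B>0. \<forall>y. \<exists>b. moments \<gamma> (of_int k * pi/4) b = y \<and> norm b \<le> B * norm y"
    using moments_bounded_inverse by metis
  then obtain Bk where Bk: "\<And>k. k \<in> {0..<8} \<Longrightarrow>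
      Bk k > 0 \<and> (\<forall>y. \<exists>b. moments \<gamma> (of_int k * pi/4) b = y \<and> norm b \<le> Bk k * norm y)"
    by metis
  define B where "B = Max (Bk ` {0..<8})"
  have Bk_le: "Bk k \<le> B" if "k \<in> {0..<8}" for k
    unfolding B_def using that by (intro Max_ge) auto
  show ?thesis
  proof (rule that)
    show "B > 0"
      using Bk[of 0] Bk_le[of 0] by auto
    fix k :: int and y
    \<comment> \<open>there are only eight distinct centres modulo \<open>2*pi\<close>\<close>
    have "real_of_int k = of_int (k mod 8) + 8 * of_int (k div 8)"
      by (metis add.commute div_mult_mod_eq mult.commute of_int_add of_int_mult of_int_numeral)
    then have centre: "of_int k * pi/4 = of_int (k mod 8) * pi/4 + 2 * pi * of_int (k div 8)"
      by (simp add: field_simps)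
    have "moments \<gamma> (of_int k * pi/4) = moments \<gamma> (of_int (k mod 8) * pi/4)"
      unfolding centre moments_def bump_shift_of_int ..
    moreover have "k mod 8 \<in> {0..<8}"
      by simp
    ultimately show "\<exists>b. moments \<gamma> (of_int k * pi/4) b = y \<and> norm b \<le> B * norm y"
      using Bk Bk_le by (metis mult_right_mono norm_ge_zero order_trans)
  qed
qed

lemma extension_constant_exists: obtains \<epsilon> where "extension_constant \<gamma> \<epsilon>"
proof -
  obtain R where R: "R > 0" "\<And>t. cmod (\<gamma> t) \<le> R"
    using curve_bounded by blast
  obtain B where B: "B > 0" "\<And>k y. \<exists>b. moments \<gamma> (of_int k * pi/4) b = y \<and> norm b \<le> B * norm y"
    using moments_uniform_bounded_inverse by blast
  define \<epsilon> where "\<epsilon> = 1 / (1 + B * (2*pi) * (1 + R)\<^sup>2)"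
  have "1 + B * (2*pi) * (1 + R)\<^sup>2 > 0"
    using B R by (simp add: add_pos_nonneg)
  then have \<epsilon>: "\<epsilon> > 0" "\<epsilon> + B * (\<epsilon> * (2*pi) * (1 + R)) * (1 + R) = 1"
    by (simp_all add: \<epsilon>_def field_simps power2_eq_square)
  have "extension_constant \<gamma> \<epsilon>"
    unfolding extension_constant_def
  proof (intro conjI allI impI \<epsilon>(1))
    fix w :: "real \<Rightarrow> real" and al be :: real
    assume "continuous_on UNIV w" "\<forall>t. w (t + 2*pi) = w t" "\<forall>t. \<bar>w t\<bar> \<le> 1"
      and arc: "be - pi \<le> al"
    then have w: "continuous_on UNIV w" "\<And>t. w (t + 2*pi) = w t" "\<And>t. \<bar>w t\<bar> \<le> 1"
      by auto
    have \<epsilon>w: "continuous_on UNIV (\<lambda>t. \<epsilon> * w t)" "\<And>t. \<epsilon> * w (t + 2*pi) = \<epsilon> * w t"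
      using w by (auto intro: continuous_intros)
    define y where "y = (integral {0..2*pi} (\<lambda>t. \<epsilon> * w t), integral {0..2*pi} (\<lambda>t. (\<epsilon> * w t) *\<^sub>R \<gamma> t))"
    have \<epsilon>w_le: "\<bar>\<epsilon> * w t\<bar> \<le> \<epsilon>" for t
      using \<epsilon>(1) w(3)[of t] by (simp add: abs_mult mult_left_le)
    then have y: "norm y \<le> \<epsilon> * (2*pi) * (1 + R)"
      unfolding y_def by (rule norm_moment_pair_le[OF \<epsilon>w(1) _ R(2)])
    obtain k :: int where k: "\<And>t. t \<in> {be - pi..be} \<Longrightarrow> bump (of_int k * pi/4) t = 0"
      using bump_center_before by blast
    define c where "c = of_int k * pi/4"
    obtain b where b: "moments \<gamma> c b = y" "norm b \<le> B * norm y"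
      using B(2) unfolding c_def by blast
    have "norm b * (1 + R) \<le> B * (\<epsilon> * (2*pi) * (1 + R)) * (1 + R)"
      using b(2) y B(1) R(1) by (simp add: mult_right_mono order_trans)
    then have "\<bar>\<epsilon> * w t - bump c t * affine_form b (\<gamma> t)\<bar> \<le> 1" for t
      using abs_triangle_ineq4[of "\<epsilon> * w t" "bump c t * affine_form b (\<gamma> t)"] \<epsilon>w_le[of t]
        abs_bump_affine_form_le[OF R(2), of c t b] \<epsilon>(2)
      by linarith
    then have "admissible_derivative \<gamma> (\<lambda>t. \<epsilon> * w t - bump c t * affine_form b (\<gamma> t))"
      using b(1) unfolding y_def by (intro admissible_derivative_correction \<epsilon>w)
    moreover have "\<epsilon> * w t - bump c t * affine_form b (\<gamma> t) = \<epsilon> * w t" if "t \<in> {al..be}" for t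
      using that arc k[of t] by (simp add: c_def)
    ultimately show "\<exists>\<mu>. admissible_derivative \<gamma> \<mu> \<and> (\<forall>t\<in>{al..be}. \<mu> t = \<epsilon> * w t)"
      by blast
  qed
  then show ?thesis
    by (rule that)
qed

lemma c_1D_le_c_ENT:
  "\<exists>C>0. \<forall>tp tm. \<gamma> tp \<noteq> \<gamma> tm \<longrightarrow> c_1D N (\<gamma> tp) (\<gamma> tm) \<le> C * c_ENT \<gamma> tp tm"
proof -
  obtain K where K: "K > 0" "\<And>x. N x \<le> K * cmod x"
    using is_norm_le_cmod[OF N] by blast
  obtain M where M: "M > 0" "\<And>s t v. cmod v = 1 \<Longrightarrow> \<bar>(\<gamma> t - \<gamma> s) \<bullet> v\<bar> \<le> M"
    using curve_chord_bounded by blast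
  obtain \<epsilon> where \<epsilon>: "extension_constant \<gamma> \<epsilon>"
    using extension_constant_exists by blast
  then have "\<epsilon> > 0"
    by (simp add: extension_constant_def)
  define C where "C = 2 * (K * (2 + K * M))"
  have "C > 0"
    using K M by (simp add: C_def add_pos_nonneg)
  show ?thesis
  proof (intro exI[of _ "C / \<epsilon>"] conjI allI impI)
    show "C / \<epsilon> > 0"
      using \<open>C > 0\<close> \<open>\<epsilon> > 0\<close> by simp
    fix tp tm
    assume ne: "\<gamma> tp \<noteq> \<gamma> tm"
    obtain al be s where arc: "al < be" "be \<le> al + pi" "\<bar>s\<bar> = 1" "{\<gamma> al, \<gamma> be} = {\<gamma> tp, \<gamma> tm}"
      "oint_via_arc tm tp s al be"
      using periodic_arc_between[of \<gamma>, OF curve_periodic ne] by blast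
    have "c_1D N (\<gamma> tp) (\<gamma> tm) \<le> C * integral {al..be} (\<lambda>t. \<bar>(\<gamma> t - \<gamma> tm) \<bullet> nu (\<gamma> tp) (\<gamma> tm)\<bar>)"
      using c_1D_le_integral[OF _ K(2) M(2) ne _ arc(4)] K(1) arc(1) by (simp add: C_def)
    also have "\<dots> \<le> C * (c_ENT \<gamma> tp tm / \<epsilon>)"
      using c_ENT_ge_integral[OF \<epsilon> M(2) ne _ _ arc(3-5)] arc(1,2) \<open>C > 0\<close> \<open>\<epsilon> > 0\<close>
      by (intro mult_left_mono) (auto simp: pos_le_divide_eq mult.commute)
    finally show "c_1D N (\<gamma> tp) (\<gamma> tm) \<le> C / \<epsilon> * c_ENT \<gamma> tp tm"
      by simp
  qed
qed

end

theorem lemma6p3: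
  fixes N :: "complex \<Rightarrow> real" and \<gamma> :: "real \<Rightarrow> complex"
  assumes "is_norm N" and "strictly_convex_norm N" and "C1_away_from_0 N"
    and "ccw_arclength_param N \<gamma>"
  shows "\<exists>C>0. \<forall>thp thm. \<gamma> thp \<noteq> \<gamma> thm \<longrightarrow>
           c_1D N (\<gamma> thp) (\<gamma> thm) \<le> C * c_ENT \<gamma> thp thm"
proof -
  interpret strictly_convex_curve N \<gamma>
    using assms by (simp add: strictly_convex_curve_def strictly_convex_curve_axioms_def arclength_curve_def)
  show ?thesis
    by (rule c_1D_le_c_ENT)
qed

end
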